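(* Every infinite crowded Tychonoff space $X$ admits a continuous surjection onto an infinite (Tychonoff) homogeneous space of countable weight.
   Context: A space is crowded if it has no isolated points. A space $Y$ is homogeneous if for any $y,z\in Y$ there is a homeomorphism of $Y$ onto itself mapping $y$ to $z$. *)

theory Defs
  imports "HOL-Analysis.Analysis"
begin

definition tychonoff_space :: "'a topology \<Rightarrow> bool" where
  "tychonoff_space X \<longleftrightarrow> completely_regular_space X \<and> t1_space X"

definition crowded :: "'a topology \<Rightarrow> bool" where
  "crowded X \<longleftrightarrow> (\<forall>x \<in> topspace X. \<not> openin X {x})"

definition homogeneous_space :: "'a topology \<Rightarrow> bool" where
  "homogeneous_space Y \<longleftrightarrow>
     (\<forall>y \<in> topspace Y. \<forall>z \<in> topspace Y. \<exists>h. homeomorphic_map Y Y h \<and> h y = z)"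

end

theory Submission
  imports Defs
begin

text \<open>
  Look at the continuous real-valued functions on X.  If the image of one of them contains an
  interval, wrapping that interval once around the circle gives a continuous surjection onto the
  circle.  Otherwise every such image has empty interior.  If moreover some function g is
  unbounded, pick values of g tending to infinity and, between consecutive ones, values c_k that
  g omits; the index of the interval between consecutive c_k containing g x is then a locally
  constant surjection onto a countably infinite discrete space.  If every function is bounded,
  X is pseudocompact.  It is also zero-dimensional, since a Urysohn function can be cut at an
  omitted value; as X is crowded and T1, every nonempty clopen set therefore splits into two
  nonempty clopen sets.  Splitting repeatedly gives a Cantor scheme whose coding map into the
  Cantor set has dense image, and pseudocompactness makes the image closed.
\<close>

lemma metrizable_imp_tychonoff_space: "metrizable_space X \<Longrightarrow> tychonoff_space X"
  by (simp add: tychonoff_space_def metrizable_imp_completely_regular_space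
      metrizable_imp_t1_space)

lemma second_countable_euclidean:
  "second_countable (euclidean :: 'a::second_countable_topology topology)"
proof -
  obtain \<B> :: "'a set set" where "countable \<B>" "topological_basis \<B>"
    using ex_countable_basis by blast
  then show ?thesis
    unfolding second_countable_def
    by (metis open_openin topological_basis_open topological_basisE)
qed

lemma homogeneous_space_discrete_topology: "homogeneous_space (discrete_topology U)"
  unfolding homogeneous_space_def
proof (intro ballI)
  fix y z assume "y \<in> topspace (discrete_topology U)" "z \<in> topspace (discrete_topology U)"
  then have "homeomorphic_map (discrete_topology U) (discrete_topology U) (id(y := z, z := y))"
    by (intro homeomorphic_map_involution) auto
  then show "\<exists>h. homeomorphic_map (discrete_topology U) (discrete_topology U) h \<and> h y = z"
    by force
qed

lemma homogeneous_space_subtopologyI: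
  assumes "\<And>y z. y \<in> topspace X \<inter> S \<Longrightarrow> z \<in> topspace X \<inter> S \<Longrightarrow>
             \<exists>h k. homeomorphic_maps X X h k \<and> h ` S \<subseteq> S \<and> k ` S \<subseteq> S \<and> h y = z"
  shows "homogeneous_space (subtopology X S)"
  unfolding homogeneous_space_def
proof (intro ballI)
  fix y z assume "y \<in> topspace (subtopology X S)" "z \<in> topspace (subtopology X S)"
  then obtain h k where "homeomorphic_maps X X h k" "h ` S \<subseteq> S" "k ` S \<subseteq> S" "h y = z"
    using assms by (metis topspace_subtopology)
  then have "homeomorphic_maps (subtopology X S) (subtopology X S) h k"
    by (intro homeomorphic_maps_subtopologies_alt) auto
  with \<open>h y = z\<close> show "\<exists>h. homeomorphic_map (subtopology X S) (subtopology X S) h \<and> h y = z"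
    using homeomorphic_maps_imp_map by blast
qed

lemma continuous_map_locally_constant:
  assumes "f \<in> topspace X \<rightarrow> topspace Y"
    and "\<And>x. x \<in> topspace X \<Longrightarrow> \<exists>W. openin X W \<and> x \<in> W \<and> (\<forall>y\<in>W. f y = f x)"
  shows "continuous_map X Y f"
  unfolding continuous_map_def
proof (intro conjI allI impI)
  fix U
  show "openin X {x \<in> topspace X. f x \<in> U}"
  proof (subst openin_subopen, intro ballI)
    fix x assume x: "x \<in> {x \<in> topspace X. f x \<in> U}"
    then obtain W where W: "openin X W" "x \<in> W" "\<forall>y\<in>W. f y = f x"
      using assms(2) by blast
    have "W \<subseteq> {x \<in> topspace X. f x \<in> U}"
    proof
      fix y assume y: "y \<in> W"
      then have "f y = f x"
        using W(3) by blast
      with x y openin_subset [OF W(1)] show "y \<in> {x \<in> topspace X. f x \<in> U}"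
        by auto
    qed
    with W show "\<exists>T. openin X T \<and> x \<in> T \<and> T \<subseteq> {x \<in> topspace X. f x \<in> U}"
      by blast
  qed
qed (rule assms(1))

lemma tendsto_fun_componentwise:
  fixes u :: "'x \<Rightarrow> 'i \<Rightarrow> 'b::topological_space"
  shows "(u \<longlongrightarrow> p) F \<longleftrightarrow> (\<forall>i. ((\<lambda>n. u n i) \<longlongrightarrow> p i) F)"
  using limitin_componentwise [of "\<lambda>i. euclidean" UNIV u p F]
  by (simp add: euclidean_product_topology)

lemma omitted_value_between:
  fixes S :: "real set"
  assumes "interior S = {}" and "a < b"
  obtains t where "a < t" "t < b" "t \<notin> S"
proof -
  have "\<not> {a<..<b} \<subseteq> S"
    using assms interior_maximal [of "{a<..<b}" S] by auto
  then obtain t where "t \<in> {a<..<b}" "t \<notin> S"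
    by blast
  then show thesis
    by (intro that) auto
qed

definition maps_onto_homogeneous :: "'a topology \<Rightarrow> bool" where
  "maps_onto_homogeneous X \<longleftrightarrow>
     (\<exists>(Y :: (nat \<Rightarrow> real) topology) f.
        infinite (topspace Y) \<and> tychonoff_space Y \<and> homogeneous_space Y \<and>
        second_countable Y \<and> continuous_map X Y f \<and> f ` topspace X = topspace Y)"

lemma maps_onto_homogeneous_subspaceI:
  fixes S :: "(nat \<Rightarrow> real) set"
  assumes "infinite S" and "homogeneous_space (top_of_set S)"
    and "continuous_map X euclidean f" and "f ` topspace X = S"
  shows "maps_onto_homogeneous X"
  unfolding maps_onto_homogeneous_def
proof (intro exI conjI)
  show "tychonoff_space (top_of_set S)"
    by (simp add: metrizable_imp_tychonoff_space metrizable_space_subtopology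
        metrizable_space_euclidean)
  show "second_countable (top_of_set S)"
    by (simp add: second_countable_subtopology second_countable_euclidean)
  show "continuous_map X (top_of_set S) f"
    using assms by (auto simp: continuous_map_in_subtopology)
qed (use assms in auto)

lemma maps_onto_homogeneous_discreteI:
  fixes h :: "'a \<Rightarrow> nat"
  assumes "continuous_map X (discrete_topology UNIV) h" and "h ` topspace X = UNIV"
  shows "maps_onto_homogeneous X"
  unfolding maps_onto_homogeneous_def
proof (intro exI conjI)
  let ?e = "\<lambda>n (i::nat). real n"
  have "inj ?e"
    by (simp add: inj_def fun_eq_iff)
  then show "infinite (topspace (discrete_topology (range ?e)))"
    by (simp add: range_inj_infinite)
  show "tychonoff_space (discrete_topology (range ?e))"
    by (simp add: metrizable_imp_tychonoff_space)
  show "second_countable (discrete_topology (range ?e))"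
    by (simp add: second_countable_discrete_topology)
  have "continuous_map (discrete_topology UNIV) (discrete_topology (range ?e)) ?e"
    by simp
  then show "continuous_map X (discrete_topology (range ?e)) (?e \<circ> h)"
    using assms(1) continuous_map_compose by blast
  show "(?e \<circ> h) ` topspace X = topspace (discrete_topology (range ?e))"
    by (metis assms(2) image_comp topspace_discrete_topology)
qed (rule homogeneous_space_discrete_topology)

subsection \<open>The circle\<close>

definition circle_point :: "real \<Rightarrow> nat \<Rightarrow> real" where
  "circle_point t = (\<lambda>i. if i = 0 then cos t else if i = 1 then sin t else 0)"

definition rotation :: "real \<Rightarrow> (nat \<Rightarrow> real) \<Rightarrow> nat \<Rightarrow> real" where
  "rotation \<alpha> p = (\<lambda>i. if i = 0 then cos \<alpha> * p 0 - sin \<alpha> * p 1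
                     else if i = 1 then sin \<alpha> * p 0 + cos \<alpha> * p 1 else p i)"

lemma continuous_on_circle_point: "continuous_on UNIV circle_point"
proof (intro continuous_on_coordinatewise_then_product)
  fix i :: nat
  show "continuous_on UNIV (\<lambda>t. circle_point t i)"
    by (cases "i = 0"; cases "i = 1"; simp add: circle_point_def; intro continuous_intros)
qed

lemma continuous_on_rotation: "continuous_on UNIV (rotation \<alpha>)"
proof (intro continuous_on_coordinatewise_then_product)
  fix i :: nat
  show "continuous_on UNIV (\<lambda>p. rotation \<alpha> p i)"
    by (cases "i = 0"; cases "i = 1"; simp add: rotation_def;
        intro continuous_intros continuous_on_product_coordinates)
qed

lemma rotation_circle_point: "rotation \<alpha> (circle_point t) = circle_point (t + \<alpha>)"
  by (simp add: rotation_def circle_point_def fun_eq_iff cos_add sin_add algebra_simps)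

lemma rotation_rotation: "rotation \<beta> (rotation \<alpha> p) = rotation (\<alpha> + \<beta>) p"
  by (simp add: rotation_def fun_eq_iff cos_add sin_add algebra_simps)

lemma rotation_zero: "rotation 0 p = p"
  by (simp add: rotation_def fun_eq_iff)

lemma homogeneous_space_circle: "homogeneous_space (top_of_set (range circle_point))"
proof (rule homogeneous_space_subtopologyI)
  fix y z assume "y \<in> topspace euclidean \<inter> range circle_point"
    and "z \<in> topspace euclidean \<inter> range circle_point"
  then obtain s t where y: "y = circle_point s" and z: "z = circle_point t"
    by auto
  have "homeomorphic_maps euclidean euclidean (rotation (t - s)) (rotation (s - t))"
    by (simp add: homeomorphic_maps_def continuous_on_rotation rotation_rotation rotation_zero)
  moreover have "rotation \<alpha> ` range circle_point \<subseteq> range circle_point" for \<alpha>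
    by (auto simp: rotation_circle_point)
  moreover have "rotation (t - s) y = z"
    by (simp add: y z rotation_circle_point)
  ultimately show "\<exists>h k. homeomorphic_maps euclidean euclidean h k \<and>
      h ` range circle_point \<subseteq> range circle_point \<and>
      k ` range circle_point \<subseteq> range circle_point \<and> h y = z"
    by blast
qed

lemma infinite_circle: "infinite (range circle_point)"
proof
  assume "finite (range circle_point)"
  then have "finite ((\<lambda>p. p 0) ` range circle_point)"
    by simp
  moreover have "{-1..1} \<subseteq> (\<lambda>p. p 0) ` range circle_point"
  proof
    fix y :: real assume "y \<in> {-1..1}"
    then have "y = circle_point (arccos y) 0"
      by (simp add: circle_point_def)
    then show "y \<in> (\<lambda>p. p 0) ` range circle_point"
      by blast
  qed
  moreover have "infinite {-1..1::real}"
    by (simp add: infinite_Icc)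
  ultimately show False
    using finite_subset by blast
qed

lemma range_circle_point: "range circle_point = circle_point ` {0..2 * pi}"
proof (intro equalityI subsetI)
  fix p assume "p \<in> range circle_point"
  then obtain t where p: "p = circle_point t"
    by blast
  obtain \<theta> where \<theta>: "0 \<le> \<theta>" "\<theta> < 2 * pi" "cos t = cos \<theta>" "sin t = sin \<theta>"
    using sincos_total_2pi [of "cos t" "sin t"] by auto
  have "p = circle_point \<theta>"
    by (simp only: p circle_point_def \<theta>(3,4))
  with \<theta>(1,2) show "p \<in> circle_point ` {0..2 * pi}"
    by force
qed auto

lemma circle_point_wrap_interval:
  assumes "a < b"
  shows "(\<lambda>s. circle_point (2 * pi * (s - a) / (b - a))) ` {a..b} = range circle_point"
proof (intro equalityI subsetI)
  fix p assume "p \<in> range circle_point"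
  then obtain u where u: "0 \<le> u" "u \<le> 2 * pi" "p = circle_point u"
    unfolding range_circle_point by auto
  define s where "s = a + u * (b - a) / (2 * pi)"
  have "u * (b - a) \<le> 2 * pi * (b - a)"
    using u(2) assms by (intro mult_right_mono) auto
  then have "u * (b - a) / (2 * pi) \<le> b - a"
    by (simp add: pos_divide_le_eq mult.commute)
  with u(1) assms have "s \<in> {a..b}"
    by (simp add: s_def)
  moreover have "2 * pi * (s - a) / (b - a) = u"
    using assms by (simp add: s_def field_simps)
  ultimately show "p \<in> (\<lambda>s. circle_point (2 * pi * (s - a) / (b - a))) ` {a..b}"
    using u(3) by (intro rev_image_eqI [of s]) simp_all
qed auto

lemma maps_onto_homogeneous_if_interval_in_image:
  fixes g :: "'a \<Rightarrow> real"
  assumes g: "continuous_map X euclideanreal g" and "a < b" and "{a..b} \<subseteq> g ` topspace X"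
  shows "maps_onto_homogeneous X"
proof -
  define wrap where "wrap s = circle_point (2 * pi * (s - a) / (b - a))" for s
  have "continuous_map X euclideanreal (\<lambda>x. 2 * pi * (g x - a) / (b - a))"
    using g \<open>a < b\<close> by (intro continuous_intros) auto
  then have "continuous_map X euclidean (circle_point \<circ> (\<lambda>x. 2 * pi * (g x - a) / (b - a)))"
    by (rule continuous_map_compose) (simp add: continuous_on_circle_point)
  then have cont: "continuous_map X euclidean (wrap \<circ> g)"
    by (simp add: wrap_def o_def)
  have "range circle_point = wrap ` {a..b}"
    using circle_point_wrap_interval [OF \<open>a < b\<close>] by (simp add: wrap_def)
  also have "\<dots> \<subseteq> wrap ` g ` topspace X"
    using assms(3) by (rule image_mono)
  finally have "range circle_point \<subseteq> (wrap \<circ> g) ` topspace X"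
    by (simp add: image_comp)
  moreover have "(wrap \<circ> g) ` topspace X \<subseteq> range circle_point"
    by (auto simp: wrap_def)
  ultimately have "(wrap \<circ> g) ` topspace X = range circle_point"
    by blast
  then show ?thesis
    by (rule maps_onto_homogeneous_subspaceI [OF infinite_circle homogeneous_space_circle cont])
qed

subsection \<open>A countable discrete image\<close>

lemma Least_exceeding_eq_iff:
  fixes c :: "nat \<Rightarrow> 'a::linorder"
  assumes "\<exists>n. t < c n" and "t \<notin> range c"
  shows "(LEAST n. t < c n) = n \<longleftrightarrow> t < c n \<and> (\<forall>m<n. c m < t)"
proof
  assume n: "(LEAST n. t < c n) = n"
  show "t < c n \<and> (\<forall>m<n. c m < t)"
  proof (intro conjI allI impI)
    show "t < c n"
      using LeastI_ex [OF assms(1)] by (simp add: n)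
    fix m assume "m < n"
    then have "\<not> t < c m"
      using not_less_Least [of m "\<lambda>n. t < c n"] by (simp add: n)
    moreover have "c m \<noteq> t"
      using assms(2) by auto
    ultimately show "c m < t"
      by simp
  qed
next
  assume n: "t < c n \<and> (\<forall>m<n. c m < t)"
  show "(LEAST n. t < c n) = n"
  proof (rule Least_equality)
    show "n \<le> m" if "t < c m" for m
      using n that by (meson not_le order.asym)
  qed (use n in simp)
qed

lemma continuous_map_least_exceeding:
  fixes g :: "'a \<Rightarrow> real" and c :: "nat \<Rightarrow> real"
  assumes g: "continuous_map X euclideanreal g"
    and unbounded: "\<And>t. \<exists>n. t < c n"
    and omitted: "\<And>n. c n \<notin> g ` topspace X"
  shows "continuous_map X (discrete_topology UNIV) (\<lambda>x. LEAST n. g x < c n)"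
proof (rule continuous_map_locally_constant)
  have least_iff: "(LEAST n. g x < c n) = n \<longleftrightarrow> g x \<in> {..<c n} \<inter> (\<Inter>m<n. {c m<..})"
    if "x \<in> topspace X" for x n
  proof -
    have "g x \<notin> range c"
      using omitted that by (metis imageI rangeE)
    then show ?thesis
      using Least_exceeding_eq_iff [OF unbounded, of "g x" n] by auto
  qed
  fix x assume x: "x \<in> topspace X"
  define W where "W = {y \<in> topspace X. g y \<in> {..<c (LEAST n. g x < c n)} \<inter>
                                          (\<Inter>m<(LEAST n. g x < c n). {c m<..})}"
  show "\<exists>W. openin X W \<and> x \<in> W \<and> (\<forall>y\<in>W. (LEAST n. g y < c n) = (LEAST n. g x < c n))"
  proof (intro exI conjI ballI)
    show "openin X W"
      unfolding W_def using g by (rule openin_continuous_map_preimage)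
        (simp flip: open_openin; intro open_Int open_INT; simp)
    show "x \<in> W"
      using x least_iff [OF x, of "LEAST n. g x < c n"] by (simp add: W_def)
    show "(LEAST n. g y < c n) = (LEAST n. g x < c n)" if "y \<in> W" for y
      using that least_iff [of y] by (simp add: W_def)
  qed
qed simp

lemma unbounded_above_strict_mono_sequence:
  fixes S :: "real set"
  assumes "\<not> bdd_above S"
  obtains s where "strict_mono s" and "\<And>n. s n \<in> S" and "\<And>n. real n \<le> s n"
proof -
  have above: "\<exists>y\<in>S. M < y" for M
    using assms by (meson bdd_above.I not_le)
  have "\<exists>s. \<forall>n. (s n \<in> S \<and> real n \<le> s n) \<and> s n < s (Suc n)"
  proof (rule dependent_nat_choice)
    show "\<exists>y. y \<in> S \<and> real 0 \<le> y"
      using above [of 0] by force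
    show "\<exists>y. (y \<in> S \<and> real (Suc n) \<le> y) \<and> x < y" for x n
      using above [of "max x (Suc n)"] by force
  qed
  then show thesis
    using that by (auto simp: strict_mono_Suc_iff)
qed

lemma omitted_values_separating:
  fixes S :: "real set"
  assumes empty_interior: "interior S = {}" and "\<not> bdd_above S"
  obtains c :: "nat \<Rightarrow> real"
  where "\<And>t. \<exists>n. t < c n" and "\<And>n. c n \<notin> S" and "\<And>n. \<exists>s\<in>S. s < c n \<and> (\<forall>m<n. c m < s)"
proof -
  obtain s where "strict_mono s" and s_in: "\<And>n. s n \<in> S" and s_ge: "\<And>n. real n \<le> s n"
    using unbounded_above_strict_mono_sequence [OF assms(2)] by metis
  have "\<forall>n. \<exists>t. s n < t \<and> t < s (Suc n) \<and> t \<notin> S"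
  proof
    fix n
    show "\<exists>t. s n < t \<and> t < s (Suc n) \<and> t \<notin> S"
      by (rule omitted_value_between [OF empty_interior, of "s n" "s (Suc n)"])
        (use \<open>strict_mono s\<close> in \<open>auto simp: strict_mono_def\<close>)
  qed
  then obtain c where c: "\<And>n. s n < c n" "\<And>n. c n < s (Suc n)" "\<And>n. c n \<notin> S"
    by metis
  show thesis
  proof (rule that)
    show "\<exists>n. t < c n" for t
    proof -
      obtain n :: nat where "t \<le> n"
        using real_arch_simple by blast
      then show ?thesis
        using s_ge [of n] c(1) [of n] by (intro exI [of _ n]) linarith
    qed
    show "c n \<notin> S" for n
      by (rule c(3))
    show "\<exists>s\<in>S. s < c n \<and> (\<forall>m<n. c m < s)" for n
    proof (intro bexI conjI allI impI)
      show "s n < c n"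
        by (rule c(1))
      show "c m < s n" if "m < n" for m
        using c(2) [of m] strict_mono_less_eq [OF \<open>strict_mono s\<close>, of "Suc m" n] that by simp
    qed (rule s_in)
  qed
qed

lemma maps_onto_homogeneous_if_unbounded:
  fixes g :: "'a \<Rightarrow> real"
  assumes g: "continuous_map X euclideanreal g"
    and "interior (g ` topspace X) = {}" and "\<not> bdd_above (g ` topspace X)"
  shows "maps_onto_homogeneous X"
proof -
  obtain c :: "nat \<Rightarrow> real" where unbounded: "\<And>t. \<exists>n. t < c n"
    and omitted: "\<And>n. c n \<notin> g ` topspace X"
    and hit: "\<And>n. \<exists>s\<in>g ` topspace X. s < c n \<and> (\<forall>m<n. c m < s)"
    using omitted_values_separating [OF assms(2,3)] by metis
  have "n \<in> (\<lambda>x. LEAST n. g x < c n) ` topspace X" for n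
  proof -
    obtain x where x: "x \<in> topspace X" and "g x < c n \<and> (\<forall>m<n. c m < g x)"
      using hit [of n] by blast
    moreover have "g x \<notin> range c"
      using omitted x by (metis imageI rangeE)
    ultimately have "(LEAST k. g x < c k) = n"
      using Least_exceeding_eq_iff [OF unbounded, of "g x" n] by simp
    with x show ?thesis
      by (rule rev_image_eqI [OF _ sym])
  qed
  then have "(\<lambda>x. LEAST n. g x < c n) ` topspace X = UNIV"
    by blast
  with continuous_map_least_exceeding [OF g unbounded omitted] show ?thesis
    by (rule maps_onto_homogeneous_discreteI)
qed

subsection \<open>The Cantor set\<close>

text \<open>Boundedness above suffices: apply it to \<open>- g\<close> for boundedness below.\<close>

definition pseudocompact :: "'a topology \<Rightarrow> bool" where
  "pseudocompact X \<longleftrightarrow> (\<forall>g. continuous_map X euclideanreal g \<longrightarrow> bdd_above (g ` topspace X))"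

lemma pseudocompact_limit_in_image:
  fixes F :: "'a \<Rightarrow> 'b::metric_space"
  assumes "pseudocompact X" and F: "continuous_map X euclidean F"
    and x: "\<And>n. x n \<in> topspace X" and lim: "(\<lambda>n. F (x n)) \<longlonglongrightarrow> b"
  shows "b \<in> F ` topspace X"
proof (rule ccontr)
  assume b: "b \<notin> F ` topspace X"
  define d where "d y = dist (F y) b" for y
  have "continuous_map X euclideanreal ((\<lambda>q. dist q b) \<circ> F)"
    using F by (rule continuous_map_compose) (simp add: continuous_on_dist)
  then have "continuous_map X euclideanreal (\<lambda>y. inverse (d y))"
    using b by (intro continuous_map_real_inverse) (auto simp: d_def o_def)
  then have "bdd_above ((\<lambda>y. inverse (d y)) ` topspace X)"
    using assms(1) by (simp add: pseudocompact_def)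
  then obtain M where M: "\<And>y. y \<in> topspace X \<Longrightarrow> inverse (d y) \<le> M"
    by (auto simp: bdd_above_def)
  have "eventually (\<lambda>n. dist (F (x n)) b < inverse (max M 1)) sequentially"
    using lim by (rule tendstoD) simp
  then obtain n where n: "d (x n) < inverse (max M 1)"
    unfolding d_def eventually_sequentially by blast
  have "d (x n) > 0"
    using b x [of n] by (auto simp: d_def)
  with n have "inverse (inverse (max M 1)) < inverse (d (x n))"
    by (rule less_imp_inverse_less)
  then have "M < inverse (d (x n))"
    by simp
  with M [OF x [of n]] show False
    by simp
qed

lemma zero_dimensional_if_real_images_have_empty_interior:
  assumes "completely_regular_space X"
    and empty_interior: "\<And>g. continuous_map X euclideanreal g \<Longrightarrow> interior (g ` topspace X) = {}"
  shows "X dim_le 0"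
  unfolding dimension_le_0_neighbourhood_base_of_clopen neighbourhood_base_of
proof (intro allI impI, elim conjE)
  fix W x assume W: "openin X W" and "x \<in> W"
  then have "closedin X (topspace X - W)" and "x \<in> topspace X - (topspace X - W)"
    using openin_subset by auto
  then obtain h :: "'a \<Rightarrow> real" where h: "continuous_map X (top_of_set {0..1}) h"
    and "h x = 0" and h_outside: "h ` (topspace X - W) \<subseteq> {1}"
    using assms(1) unfolding completely_regular_space_def by blast
  then have h_real: "continuous_map X euclideanreal h"
    using continuous_map_into_fulltopology by blast
  obtain t where "0 < t" "t < 1" "t \<notin> h ` topspace X"
    using omitted_value_between [OF empty_interior [OF h_real], of 0 1] by auto
  define V where "V = {y \<in> topspace X. h y \<in> {..<t}}"
  have "openin X V"
    unfolding V_def using h_real by (rule openin_continuous_map_preimage) simp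
  moreover have "closedin X V"
  proof -
    have "V = {y \<in> topspace X. h y \<in> {..t}}"
      unfolding V_def using \<open>t \<notin> h ` topspace X\<close> by force
    then show ?thesis
      using closedin_continuous_map_preimage [OF h_real, of "{..t}"] by simp
  qed
  moreover have "x \<in> V"
    unfolding V_def using \<open>h x = 0\<close> \<open>0 < t\<close> \<open>x \<in> W\<close> W openin_subset by auto
  moreover have "V \<subseteq> W"
    unfolding V_def using h_outside \<open>t < 1\<close> by fastforce
  ultimately show "\<exists>U V. openin X U \<and> (closedin X V \<and> openin X V) \<and> x \<in> U \<and> U \<subseteq> V \<and> V \<subseteq> W"
    by blast
qed

lemma zero_dimensional_clopen_neighbourhood:
  assumes "X dim_le 0" and "openin X W" and "x \<in> W"
  obtains V where "openin X V" "closedin X V" "x \<in> V" "V \<subseteq> W"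
proof -
  obtain U V where "openin X U" "closedin X V" "openin X V" "x \<in> U" "U \<subseteq> V" "V \<subseteq> W"
    using assms(1) [unfolded dimension_le_0_neighbourhood_base_of_clopen neighbourhood_base_of,
        rule_format, OF conjI, OF assms(2,3)]
    by blast
  then show thesis
    using that by blast
qed

definition splits_clopens :: "'a topology \<Rightarrow> bool" where
  "splits_clopens X \<longleftrightarrow> (\<forall>A. openin X A \<and> closedin X A \<and> A \<noteq> {} \<longrightarrow>
      (\<exists>B. openin X B \<and> closedin X B \<and> B \<noteq> {} \<and> B \<subset> A))"

lemma splits_clopens_if_zero_dimensional:
  assumes "X dim_le 0" and "t1_space X" and "crowded X"
  shows "splits_clopens X"
  unfolding splits_clopens_def
proof (intro allI impI, elim conjE)
  fix A assume A: "openin X A" "closedin X A" "A \<noteq> {}"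
  then obtain x where "x \<in> A"
    by blast
  have "A \<subseteq> topspace X"
    using A(1) openin_subset by blast
  have "A \<noteq> {x}"
    using assms(3) A(1) \<open>x \<in> A\<close> \<open>A \<subseteq> topspace X\<close> by (auto simp: crowded_def)
  then obtain y where "y \<in> A" "y \<noteq> x"
    using \<open>x \<in> A\<close> by blast
  have "openin X (topspace X - {y})"
    using assms(2) \<open>y \<in> A\<close> \<open>A \<subseteq> topspace X\<close> by (auto simp: t1_space_closedin_singleton)
  moreover have "x \<in> topspace X - {y}"
    using \<open>x \<in> A\<close> \<open>y \<noteq> x\<close> \<open>A \<subseteq> topspace X\<close> by blast
  ultimately obtain V where "openin X V" "closedin X V" "x \<in> V" "V \<subseteq> topspace X - {y}"
    by (rule zero_dimensional_clopen_neighbourhood [OF assms(1)])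
  then show "\<exists>B. openin X B \<and> closedin X B \<and> B \<noteq> {} \<and> B \<subset> A"
    using A \<open>x \<in> A\<close> \<open>y \<in> A\<close>
    by (intro exI [of _ "A \<inter> V"]) auto
qed

definition cantor_set :: "(nat \<Rightarrow> real) set" where
  "cantor_set = {p. \<forall>i. p i \<in> {0, 1}}"

definition flip_bits :: "nat set \<Rightarrow> (nat \<Rightarrow> real) \<Rightarrow> nat \<Rightarrow> real" where
  "flip_bits D p = (\<lambda>i. if i \<in> D then 1 - p i else p i)"

lemma continuous_on_flip_bits: "continuous_on UNIV (flip_bits D)"
proof (intro continuous_on_coordinatewise_then_product)
  fix i
  show "continuous_on UNIV (\<lambda>p. flip_bits D p i)"
    by (cases "i \<in> D"; simp add: flip_bits_def;
        intro continuous_intros continuous_on_product_coordinates)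
qed

lemma flip_bits_flip_bits: "flip_bits D (flip_bits D p) = p"
  by (simp add: flip_bits_def fun_eq_iff)

lemma flip_bits_cantor_set: "p \<in> cantor_set \<Longrightarrow> flip_bits D p \<in> cantor_set"
  by (auto simp: cantor_set_def flip_bits_def)

lemma homogeneous_space_cantor_set: "homogeneous_space (top_of_set cantor_set)"
proof (rule homogeneous_space_subtopologyI)
  fix y z assume "y \<in> topspace euclidean \<inter> cantor_set" "z \<in> topspace euclidean \<inter> cantor_set"
  then have bits: "y i \<in> {0, 1}" "z i \<in> {0, 1}" for i
    by (auto simp: cantor_set_def)
  have "flip_bits {i. y i \<noteq> z i} y i = z i" for i
    using bits [of i] by (auto simp: flip_bits_def)
  then have "flip_bits {i. y i \<noteq> z i} y = z"
    by blast
  moreover have "homeomorphic_maps euclidean euclidean (flip_bits D) (flip_bits D)" for D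
    by (simp add: homeomorphic_maps_def continuous_on_flip_bits flip_bits_flip_bits)
  moreover have "flip_bits D ` cantor_set \<subseteq> cantor_set" for D
    using flip_bits_cantor_set by blast
  ultimately show "\<exists>h k. homeomorphic_maps euclidean euclidean h k \<and>
      h ` cantor_set \<subseteq> cantor_set \<and> k ` cantor_set \<subseteq> cantor_set \<and> h y = z"
    by blast
qed

lemma infinite_cantor_set: "infinite cantor_set"
proof -
  define e where "e k = (\<lambda>i. if i = k then 1 else 0 :: real)" for k :: nat
  have "inj e"
    by (auto simp: inj_def e_def fun_eq_iff split: if_splits)
  moreover have "range e \<subseteq> cantor_set"
    by (auto simp: e_def cantor_set_def)
  ultimately show ?thesis
    using range_inj_infinite infinite_super by blast
qed

definition clopen_half :: "'a topology \<Rightarrow> 'a set \<Rightarrow> 'a set" where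
  "clopen_half X A = (SOME B. openin X B \<and> closedin X B \<and> B \<noteq> {} \<and> B \<subset> A)"

text \<open>A word is stored with its last letter first, so that \<open>cell X (b # w)\<close> is one of the
  two halves of \<open>cell X w\<close>.\<close>

fun cell :: "'a topology \<Rightarrow> bool list \<Rightarrow> 'a set" where
  "cell X [] = topspace X"
| "cell X (b # w) = (if b then clopen_half X (cell X w) else cell X w - clopen_half X (cell X w))"

fun address :: "'a topology \<Rightarrow> 'a \<Rightarrow> nat \<Rightarrow> bool list" where
  "address X x 0 = []"
| "address X x (Suc n) = (x \<in> clopen_half X (cell X (address X x n))) # address X x n"

fun prefix_word :: "(nat \<Rightarrow> bool) \<Rightarrow> nat \<Rightarrow> bool list" where
  "prefix_word f 0 = []"
| "prefix_word f (Suc n) = f n # prefix_word f n"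

definition cantor_code :: "'a topology \<Rightarrow> 'a \<Rightarrow> nat \<Rightarrow> real" where
  "cantor_code X x n = of_bool (hd (address X x (Suc n)))"

lemma length_address [simp]: "length (address X x n) = n"
  by (induction n) auto

lemma length_prefix_word [simp]: "length (prefix_word f n) = n"
  by (induction n) auto

lemma address_in_cell: "x \<in> topspace X \<Longrightarrow> x \<in> cell X (address X x n)"
  by (induction n) auto

context
  fixes X :: "'a topology"
  assumes splits: "splits_clopens X" and nonempty: "topspace X \<noteq> {}"
begin

lemma clopen_half_proper_clopen:
  assumes "openin X A" "closedin X A" "A \<noteq> {}"
  shows "openin X (clopen_half X A) \<and> closedin X (clopen_half X A) \<and>
         clopen_half X A \<noteq> {} \<and> clopen_half X A \<subset> A"
proof -
  have "\<exists>B. openin X B \<and> closedin X B \<and> B \<noteq> {} \<and> B \<subset> A"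
    using splits assms unfolding splits_clopens_def by blast
  then show ?thesis
    unfolding clopen_half_def by (rule someI_ex)
qed

lemma cell_clopen_nonempty: "openin X (cell X w) \<and> closedin X (cell X w) \<and> cell X w \<noteq> {}"
proof (induction w)
  case (Cons b w)
  then show ?case
    using clopen_half_proper_clopen [of "cell X w"] by auto
qed (use nonempty in simp)

lemma cell_Cons_subset: "cell X (b # w) \<subseteq> cell X w"
  using clopen_half_proper_clopen [of "cell X w"] cell_clopen_nonempty [of w] by auto

lemma address_eq_if_in_cell: "x \<in> cell X w \<Longrightarrow> address X x (length w) = w"
proof (induction w)
  case (Cons b w)
  then have "x \<in> cell X w"
    using cell_Cons_subset by blast
  with Cons show ?case
    by (cases b) auto
qed simp

lemma continuous_map_cantor_code: "continuous_map X euclidean (cantor_code X)"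
  unfolding euclidean_product_topology [symmetric] continuous_map_componentwise_UNIV
proof
  fix n
  show "continuous_map X euclideanreal (\<lambda>x. cantor_code X x n)"
  proof (rule continuous_map_locally_constant)
    fix x assume "x \<in> topspace X"
    show "\<exists>W. openin X W \<and> x \<in> W \<and> (\<forall>y\<in>W. cantor_code X y n = cantor_code X x n)"
    proof (intro exI conjI ballI)
      show "openin X (cell X (address X x (Suc n)))"
        using cell_clopen_nonempty by blast
      show "x \<in> cell X (address X x (Suc n))"
        using \<open>x \<in> topspace X\<close> by (rule address_in_cell)
      fix y assume "y \<in> cell X (address X x (Suc n))"
      then have "address X y (Suc n) = address X x (Suc n)"
        using address_eq_if_in_cell by fastforce
      then show "cantor_code X y n = cantor_code X x n"
        by (simp only: cantor_code_def)
    qed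
  qed simp
qed

lemma cell_prefix_word_mono: "m \<le> n \<Longrightarrow> cell X (prefix_word f n) \<subseteq> cell X (prefix_word f m)"
proof (induction n)
  case (Suc n)
  then show ?case
    using cell_Cons_subset [of "f n" "prefix_word f n"] by (cases "m = Suc n") auto
qed simp

lemma cantor_code_in_cell_prefix_word:
  assumes "x \<in> cell X (prefix_word f n)" and "i < n"
  shows "cantor_code X x i = of_bool (f i)"
proof -
  have "x \<in> cell X (prefix_word f (Suc i))"
    using assms cell_prefix_word_mono [of "Suc i" n f] by auto
  then have "address X x (Suc i) = f i # prefix_word f i"
    using address_eq_if_in_cell by fastforce
  then show ?thesis
    by (simp only: cantor_code_def list.sel(1))
qed

lemma cantor_code_approximates:
  assumes "p \<in> cantor_set"
  obtains x where "\<And>N. x N \<in> topspace X" and "(\<lambda>N. cantor_code X (x N)) \<longlonglongrightarrow> p"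
proof -
  define f where "f i = (p i = 1)" for i
  have "\<forall>N. \<exists>y. y \<in> cell X (prefix_word f N)"
    using cell_clopen_nonempty by blast
  then obtain x where x: "\<And>N. x N \<in> cell X (prefix_word f N)"
    by metis
  have "x N \<in> topspace X" for N
    using x [of N] cell_clopen_nonempty [of "prefix_word f N"] openin_subset by blast
  moreover have "(\<lambda>N. cantor_code X (x N)) \<longlonglongrightarrow> p"
    unfolding tendsto_fun_componentwise
  proof
    fix i
    have "eventually (\<lambda>N. cantor_code X (x N) i = p i) sequentially"
      unfolding eventually_sequentially
    proof (intro exI allI impI)
      fix N assume "Suc i \<le> N"
      then show "cantor_code X (x N) i = p i"
        using cantor_code_in_cell_prefix_word [OF x] assms by (auto simp: f_def cantor_set_def)
    qed
    then show "(\<lambda>N. cantor_code X (x N) i) \<longlonglongrightarrow> p i"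
      by (rule tendsto_eventually)
  qed
  ultimately show thesis
    by (rule that)
qed

end

lemma maps_onto_homogeneous_if_pseudocompact:
  assumes "pseudocompact X" and "splits_clopens X" and "topspace X \<noteq> {}"
  shows "maps_onto_homogeneous X"
proof -
  have cont: "continuous_map X euclidean (cantor_code X)"
    using assms(2,3) by (rule continuous_map_cantor_code)
  have "cantor_set \<subseteq> cantor_code X ` topspace X"
  proof
    fix p assume "p \<in> cantor_set"
    then obtain x where "\<And>N. x N \<in> topspace X" and "(\<lambda>N. cantor_code X (x N)) \<longlonglongrightarrow> p"
      using cantor_code_approximates [OF assms(2,3)] by metis
    with assms(1) cont show "p \<in> cantor_code X ` topspace X"
      by (intro pseudocompact_limit_in_image)
  qed
  moreover have "cantor_code X ` topspace X \<subseteq> cantor_set"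
    by (auto simp: cantor_code_def cantor_set_def)
  ultimately have "cantor_code X ` topspace X = cantor_set"
    by blast
  then show ?thesis
    by (rule maps_onto_homogeneous_subspaceI [OF infinite_cantor_set homogeneous_space_cantor_set cont])
qed

lemma maps_onto_homogeneous_if_real_images_have_empty_interior:
  assumes "crowded X" and "tychonoff_space X" and "topspace X \<noteq> {}"
    and empty_interior: "\<And>g. continuous_map X euclideanreal g \<Longrightarrow> interior (g ` topspace X) = {}"
  shows "maps_onto_homogeneous X"
proof (cases "pseudocompact X")
  case True
  have "completely_regular_space X" and "t1_space X"
    using assms(2) by (auto simp: tychonoff_space_def)
  then have "X dim_le 0"
    using empty_interior by (intro zero_dimensional_if_real_images_have_empty_interior)
  then have "splits_clopens X"
    using \<open>t1_space X\<close> assms(1) by (rule splits_clopens_if_zero_dimensional)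
  with True assms(3) show ?thesis
    by (intro maps_onto_homogeneous_if_pseudocompact)
next
  case False
  then obtain g where g: "continuous_map X euclideanreal g" and "\<not> bdd_above (g ` topspace X)"
    by (auto simp: pseudocompact_def)
  with empty_interior [OF g] show ?thesis
    by (intro maps_onto_homogeneous_if_unbounded)
qed

theorem mainTheorem2:
  fixes X :: "'a topology"
  assumes "infinite (topspace X)" and "crowded X" and "tychonoff_space X"
  shows "\<exists>(Y :: (nat \<Rightarrow> real) topology) f.
           infinite (topspace Y) \<and> tychonoff_space Y \<and> homogeneous_space Y \<and>
           second_countable Y \<and>
           continuous_map X Y f \<and> f ` topspace X = topspace Y"
proof -
  have "maps_onto_homogeneous X"
  proof (cases "\<exists>g. continuous_map X euclideanreal g \<and> interior (g ` topspace X) \<noteq> {}")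
    case True
    then obtain g t \<epsilon> where "continuous_map X euclideanreal g"
      and "\<epsilon> > 0" and "cball t \<epsilon> \<subseteq> g ` topspace X"
      by (auto simp: mem_interior_cball)
    then show ?thesis
      by (intro maps_onto_homogeneous_if_interval_in_image [of X g "t - \<epsilon>" "t + \<epsilon>"])
        (auto simp: cball_eq_atLeastAtMost)
  next
    case False
    with assms show ?thesis
      by (intro maps_onto_homogeneous_if_real_images_have_empty_interior) auto
  qed
  then show ?thesis
    unfolding maps_onto_homogeneous_def .
qed

end
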